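(* Let $\pi:\widetilde{\mathrm{S}}\to\mathrm{S}$ be a discrete covering of connected Lie groups and let $(\mathrm{G},\mathrm{G}')$ be a dual pair in $\mathrm{S}$. If $\mathrm{G}$ and $\mathrm{G}'$ are connected, then $(\pi^{-1}(\mathrm{G}),\pi^{-1}(\mathrm{G}'))$ is a dual pair in $\widetilde{\mathrm{S}}$.
   Context: A pair of subgroups $(\mathrm{G},\mathrm{G}')$ of a group $\mathrm{S}$ is a dual pair if $Z_{\mathrm{S}}(\mathrm{G}')=\mathrm{G}$ and $Z_{\mathrm{S}}(\mathrm{G})=\mathrm{G}'$, where $Z_{\mathrm{S}}$ denotes the centralizer in $\mathrm{S}$. A discrete covering is a surjective Lie group homomorphism which is a covering map with discrete (central) kernel. *)

theory Defs
  imports "HOL-Analysis.Analysis" "HOL-Algebra.Group"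
begin

definition topological_group :: "'a monoid \<Rightarrow> 'a topology \<Rightarrow> bool" where
  "topological_group S T \<longleftrightarrow>
     group S \<and> topspace T = carrier S \<and>
     continuous_map (prod_topology T T) T (\<lambda>p. fst p \<otimes>\<^bsub>S\<^esub> snd p) \<and>
     continuous_map T T (\<lambda>x. inv\<^bsub>S\<^esub> x)"

text \<open>A Lie group, rendered as a Hausdorff topological group that is locally Euclidean
  (by Gleason--Montgomery--Zippin these carry a unique compatible real-analytic Lie group
  structure, and continuous homomorphisms between them are automatically smooth).\<close>
definition lie_group :: "'a monoid \<Rightarrow> 'a topology \<Rightarrow> bool" where
  "lie_group S T \<longleftrightarrow>
     topological_group S T \<and> Hausdorff_space T \<and>
     (\<exists>n. \<forall>x\<in>topspace T. \<exists>U W. openin T U \<and> x \<in> U \<and> openin (Euclidean_space n) W \<and>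
          subtopology T U homeomorphic_space subtopology (Euclidean_space n) W)"

definition covering_map :: "'a topology \<Rightarrow> 'b topology \<Rightarrow> ('a \<Rightarrow> 'b) \<Rightarrow> bool" where
  "covering_map X Y p \<longleftrightarrow>
     continuous_map X Y p \<and> p ` topspace X = topspace Y \<and>
     (\<forall>y\<in>topspace Y. \<exists>V. openin Y V \<and> y \<in> V \<and>
        (\<exists>\<U>. \<Union>\<U> = topspace X \<inter> p -` V \<and> (\<forall>U\<in>\<U>. openin X U) \<and> pairwise disjnt \<U> \<and>
             (\<forall>U\<in>\<U>. homeomorphic_map (subtopology X U) (subtopology Y V) p)))"

definition group_kernel :: "'a monoid \<Rightarrow> 'b monoid \<Rightarrow> ('a \<Rightarrow> 'b) \<Rightarrow> 'a set" where
  "group_kernel G H f = {x \<in> carrier G. f x = \<one>\<^bsub>H\<^esub>}"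

definition discrete_covering ::
  "'a monoid \<Rightarrow> 'a topology \<Rightarrow> 'b monoid \<Rightarrow> 'b topology \<Rightarrow> ('a \<Rightarrow> 'b) \<Rightarrow> bool" where
  "discrete_covering St Tt S T p \<longleftrightarrow>
     lie_group St Tt \<and> lie_group S T \<and>
     p \<in> hom St S \<and> p ` carrier St = carrier S \<and>
     covering_map Tt T p \<and>
     subtopology Tt (group_kernel St S p) = discrete_topology (group_kernel St S p) \<and>
     (\<forall>k\<in>group_kernel St S p. \<forall>x\<in>carrier St. k \<otimes>\<^bsub>St\<^esub> x = x \<otimes>\<^bsub>St\<^esub> k)"

definition centralizer_in :: "'a monoid \<Rightarrow> 'a set \<Rightarrow> 'a set" where
  "centralizer_in S A = {g \<in> carrier S. \<forall>a\<in>A. g \<otimes>\<^bsub>S\<^esub> a = a \<otimes>\<^bsub>S\<^esub> g}"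

definition dual_pair :: "'a monoid \<Rightarrow> 'a set \<Rightarrow> 'a set \<Rightarrow> bool" where
  "dual_pair S G G' \<longleftrightarrow> subgroup G S \<and> subgroup G' S \<and>
     centralizer_in S G' = G \<and> centralizer_in S G = G'"

end

theory Submission
  imports Defs
begin

text \<open>Fix \<open>x\<close> with \<open>\<pi> x \<in> G\<close>. Because \<open>\<pi> x\<close> centralizes \<open>G'\<close>, the commutator map
  \<open>z \<mapsto> x z x\<^sup>-\<^sup>1 z\<^sup>-\<^sup>1\<close> sends \<open>\<pi>\<^sup>-\<^sup>1(G')\<close> continuously into the discrete kernel
  of \<open>\<pi>\<close>, and because the kernel is central it is constant on the fibres of \<open>\<pi>\<close>. A covering
  map is open, so the commutator map descends to a continuous map from the connected set \<open>G'\<close>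
  into a discrete space; it is therefore constant, equal to its value \<open>1\<close> at \<open>z = 1\<close>. Hence
  \<open>\<pi>\<^sup>-\<^sup>1(G)\<close> and \<open>\<pi>\<^sup>-\<^sup>1(G')\<close> centralize each other, and the reverse inclusions hold for
  any surjective homomorphism.\<close>

definition commutator :: "('a, 'b) monoid_scheme \<Rightarrow> 'a \<Rightarrow> 'a \<Rightarrow> 'a" where
  "commutator G x y = x \<otimes>\<^bsub>G\<^esub> y \<otimes>\<^bsub>G\<^esub> inv\<^bsub>G\<^esub> x \<otimes>\<^bsub>G\<^esub> inv\<^bsub>G\<^esub> y"

lemma (in group) commutator_closed [simp]:
  "x \<in> carrier G \<Longrightarrow> y \<in> carrier G \<Longrightarrow> commutator G x y \<in> carrier G"
  by (simp add: commutator_def)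

lemma (in group) commutator_eq_one_iff:
  assumes "x \<in> carrier G" "y \<in> carrier G"
  shows "commutator G x y = \<one> \<longleftrightarrow> x \<otimes> y = y \<otimes> x"
proof -
  have "commutator G x y = (x \<otimes> y) \<otimes> inv (y \<otimes> x)"
    using assms by (simp add: commutator_def m_assoc inv_mult_group)
  then show ?thesis
    using assms by (metis inv_closed inv_equality inv_inv m_closed r_inv)
qed

lemma (in group) commutator_mult_right_commuting:
  assumes "x \<in> carrier G" "y \<in> carrier G" "k \<in> carrier G" "k \<otimes> x = x \<otimes> k"
  shows "commutator G x (y \<otimes> k) = commutator G x y"
proof -
  have "k \<otimes> inv x = inv x \<otimes> k"
    using assms by (metis inv_closed inv_solve_left m_assoc m_closed r_inv r_one)
  then show ?thesis
    using assms by (simp add: commutator_def inv_mult_group m_assoc) (simp flip: m_assoc)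
qed

lemma (in group_hom) hom_commutator:
  "x \<in> carrier G \<Longrightarrow> y \<in> carrier G \<Longrightarrow> h (commutator G x y) = commutator H (h x) (h y)"
  by (simp add: commutator_def)

lemma (in group_hom) commutator_eq_if_eq_image:
  assumes "x \<in> carrier G" "z \<in> carrier G" "w \<in> carrier G" "h z = h w"
    and central: "\<And>k. k \<in> carrier G \<Longrightarrow> h k = \<one>\<^bsub>H\<^esub> \<Longrightarrow> k \<otimes> x = x \<otimes> k"
  shows "commutator G x w = commutator G x z"
proof -
  have "inv z \<otimes> w \<in> carrier G" "h (inv z \<otimes> w) = \<one>\<^bsub>H\<^esub>"
    using assms by simp_all
  moreover have "w = z \<otimes> (inv z \<otimes> w)"
    using assms by (simp flip: G.m_assoc)
  ultimately show ?thesis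
    using assms G.commutator_mult_right_commuting by metis
qed

lemma (in group_hom) subgroup_vimage:
  assumes "subgroup B H"
  shows "subgroup (carrier G \<inter> h -` B) G"
proof (rule G.subgroupI)
  show "carrier G \<inter> h -` B \<noteq> {}"
    using assms subgroup.one_closed by fastforce
qed (use assms in \<open>auto simp: subgroup.m_inv_closed subgroup.m_closed\<close>)

lemma centralizer_vimage_subset:
  fixes G :: "'a monoid" and H :: "'b monoid"
  assumes "group_hom G H h" and surj: "h ` carrier G = carrier H" and "A \<subseteq> carrier H"
  shows "centralizer_in G (carrier G \<inter> h -` A) \<subseteq> carrier G \<inter> h -` centralizer_in H A"
proof
  interpret group_hom G H h by fact
  fix g assume g: "g \<in> centralizer_in G (carrier G \<inter> h -` A)"
  then have "g \<in> carrier G" by (simp add: centralizer_in_def)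
  moreover have "h g \<otimes>\<^bsub>H\<^esub> a = a \<otimes>\<^bsub>H\<^esub> h g" if "a \<in> A" for a
  proof -
    obtain y where "y \<in> carrier G" "a = h y" using surj \<open>A \<subseteq> carrier H\<close> \<open>a \<in> A\<close> by blast
    then show ?thesis
      using g \<open>a \<in> A\<close> \<open>g \<in> carrier G\<close> by (auto simp: centralizer_in_def simp flip: hom_mult)
  qed
  ultimately show "g \<in> carrier G \<inter> h -` centralizer_in H A"
    by (auto simp: centralizer_in_def)
qed

lemma continuous_map_group_mult:
  assumes "topological_group S T" "continuous_map X T f" "continuous_map X T g"
  shows "continuous_map X T (\<lambda>z. f z \<otimes>\<^bsub>S\<^esub> g z)"
proof -
  have "continuous_map (prod_topology T T) T (\<lambda>p. fst p \<otimes>\<^bsub>S\<^esub> snd p)"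
    using assms(1) by (simp add: topological_group_def)
  from continuous_map_compose[OF continuous_map_pairedI[OF assms(2,3)] this] show ?thesis
    by (simp add: o_def)
qed

lemma continuous_map_group_inv:
  assumes "topological_group S T" "continuous_map X T f"
  shows "continuous_map X T (\<lambda>z. inv\<^bsub>S\<^esub> f z)"
  using continuous_map_compose[OF assms(2)] assms(1)
  by (auto simp: topological_group_def o_def)

lemma continuous_map_commutator:
  assumes "topological_group S T" "x \<in> carrier S"
  shows "continuous_map T T (commutator S x)"
proof -
  have const: "continuous_map T T (\<lambda>z. x)" and ident: "continuous_map T T (\<lambda>z. z)"
    using assms by (auto simp: topological_group_def)
  show ?thesis
    unfolding commutator_def
    by (intro continuous_map_group_mult continuous_map_group_inv assms(1) const ident)
qed

lemma covering_map_imp_open_map: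
  assumes "covering_map X Y p"
  shows "open_map X Y p"
  unfolding open_map_def
proof (intro allI impI)
  fix N assume N: "openin X N"
  show "openin Y (p ` N)"
  proof (subst openin_subopen, intro ballI)
    fix y assume "y \<in> p ` N"
    then obtain x where x: "x \<in> N" "y = p x" by auto
    have "x \<in> topspace X" using N x openin_subset by blast
    then have "p x \<in> topspace Y"
      using assms continuous_map_image_subset_topspace unfolding covering_map_def by blast
    then obtain V \<U> where V: "openin Y V" "p x \<in> V" "\<Union>\<U> = topspace X \<inter> p -` V"
      "\<forall>U\<in>\<U>. homeomorphic_map (subtopology X U) (subtopology Y V) p"
      using assms unfolding covering_map_def by meson
    then obtain U where U: "U \<in> \<U>" "x \<in> U" using \<open>x \<in> topspace X\<close> by blast
    have "openin (subtopology Y V) (p ` (N \<inter> U))"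
      using V(4) U(1) N homeomorphic_imp_open_map open_map_def openin_subtopology_Int by metis
    then have "openin Y (p ` (N \<inter> U))" using V(1) openin_trans_full by blast
    then show "\<exists>W. openin Y W \<and> y \<in> W \<and> W \<subseteq> p ` N" using x U by blast
  qed
qed

lemma continuous_open_map_restriction_quotient_map:
  assumes "continuous_map X Y p" "open_map X Y p" "B \<subseteq> topspace Y" "B \<subseteq> p ` topspace X"
  shows "quotient_map (subtopology X {x \<in> topspace X. p x \<in> B}) (subtopology Y B) p"
proof (rule continuous_open_imp_quotient_map)
  show "continuous_map (subtopology X {x \<in> topspace X. p x \<in> B}) (subtopology Y B) p"
    using assms(1) by (simp add: continuous_map_from_subtopology continuous_map_into_subtopology)
  show "open_map (subtopology X {x \<in> topspace X. p x \<in> B}) (subtopology Y B) p"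
    using open_map_restriction[OF assms(2)] by simp
  show "p ` topspace (subtopology X {x \<in> topspace X. p x \<in> B}) = topspace (subtopology Y B)"
    using assms(3,4) by auto
qed

lemma fibrewise_constant_on_vimage_connectedin:
  assumes "continuous_map X Y p" "open_map X Y p"
    and B: "connectedin Y B" "B \<subseteq> p ` topspace X"
    and A: "A = {x \<in> topspace X. p x \<in> B}"
    and f: "continuous_map (subtopology X A) (discrete_topology D) f"
    and fibre: "\<And>x y. x \<in> A \<Longrightarrow> y \<in> A \<Longrightarrow> p x = p y \<Longrightarrow> f x = f y"
    and "x \<in> A" "y \<in> A"
  shows "f x = f y"
proof -
  have quot: "quotient_map (subtopology X A) (subtopology Y B) p"
    unfolding A using assms(1,2) connectedin_subset_topspace[OF B(1)] B(2)
    by (rule continuous_open_map_restriction_quotient_map)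
  have ts: "topspace (subtopology X A) = A" using A by auto
  obtain g where g: "continuous_map (subtopology Y B) (discrete_topology D) g"
    and gp: "\<And>z. z \<in> A \<Longrightarrow> g (p z) = f z"
  proof (rule quotient_map_lift_exists[OF quot f])
    show "f x = f y" if "x \<in> topspace (subtopology X A)" "y \<in> topspace (subtopology X A)" "p x = p y"
      for x y
      using fibre that unfolding ts .
  next
    fix g assume "continuous_map (subtopology Y B) (discrete_topology D) g"
      and "\<And>x. x \<in> topspace (subtopology X A) \<Longrightarrow> g (p x) = f x"
    then show thesis using that unfolding ts by blast
  qed
  have "connectedin (discrete_topology D) (g ` B)"
    using connectedin_continuous_map_image[OF g] B(1) by simp
  then obtain c where c: "g ` B \<subseteq> {c}" by (auto simp: connectedin_discrete_topology)
  have "f x = c" "f y = c"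
    using c gp[OF \<open>x \<in> A\<close>] gp[OF \<open>y \<in> A\<close>] \<open>x \<in> A\<close> \<open>y \<in> A\<close> A by auto
  then show ?thesis by simp
qed

lemma discrete_covering_group_hom:
  "discrete_covering St Tt S T \<pi> \<Longrightarrow> group_hom St S \<pi>"
  by (simp add: discrete_covering_def lie_group_def topological_group_def group_hom_def
      group_hom_axioms_def)

lemma discrete_covering_commutator_continuous_into_kernel:
  assumes dc: "discrete_covering St Tt S T \<pi>"
    and x: "x \<in> carrier St" "\<pi> x \<in> centralizer_in S B"
  shows "continuous_map (subtopology Tt {z \<in> topspace Tt. \<pi> z \<in> B})
           (discrete_topology (group_kernel St S \<pi>)) (commutator St x)"
proof -
  interpret group_hom St S \<pi> using dc by (rule discrete_covering_group_hom)
  define K where "K = group_kernel St S \<pi>"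
  have tg: "topological_group St Tt" and top: "topspace Tt = carrier St"
    and disc: "subtopology Tt K = discrete_topology K"
    using dc unfolding discrete_covering_def lie_group_def topological_group_def K_def by auto
  have in_K: "commutator St x z \<in> K" if "z \<in> carrier St" "\<pi> z \<in> B" for z
  proof -
    have "\<pi> x \<otimes>\<^bsub>S\<^esub> \<pi> z = \<pi> z \<otimes>\<^bsub>S\<^esub> \<pi> x" using x(2) that by (simp add: centralizer_in_def)
    then have "\<pi> (commutator St x z) = \<one>\<^bsub>S\<^esub>"
      using x(1) that by (simp add: hom_commutator H.commutator_eq_one_iff)
    then show ?thesis using x(1) that by (simp add: K_def group_kernel_def)
  qed
  have "continuous_map (subtopology Tt {z \<in> topspace Tt. \<pi> z \<in> B}) (subtopology Tt K) (commutator St x)"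
  proof (rule continuous_map_into_subtopology)
    show "continuous_map (subtopology Tt {z \<in> topspace Tt. \<pi> z \<in> B}) Tt (commutator St x)"
      by (rule continuous_map_from_subtopology[OF continuous_map_commutator[OF tg x(1)]])
    show "commutator St x \<in> topspace (subtopology Tt {z \<in> topspace Tt. \<pi> z \<in> B}) \<rightarrow> K"
      using in_K top by auto
  qed
  then show ?thesis using disc unfolding K_def by simp
qed

lemma discrete_covering_commute_vimage_connectedin:
  assumes dc: "discrete_covering St Tt S T \<pi>"
    and B: "connectedin T B" "\<one>\<^bsub>S\<^esub> \<in> B"
    and x: "x \<in> carrier St" "\<pi> x \<in> centralizer_in S B"
    and y: "y \<in> carrier St" "\<pi> y \<in> B"
  shows "x \<otimes>\<^bsub>St\<^esub> y = y \<otimes>\<^bsub>St\<^esub> x"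
proof -
  interpret group_hom St S \<pi> using dc by (rule discrete_covering_group_hom)
  define A where "A = {z \<in> topspace Tt. \<pi> z \<in> B}"
  have top: "topspace Tt = carrier St" "topspace T = carrier S"
    and surj: "\<pi> ` carrier St = carrier S"
    and cov: "covering_map Tt T \<pi>"
    and central: "\<forall>k\<in>group_kernel St S \<pi>. \<forall>z\<in>carrier St. k \<otimes>\<^bsub>St\<^esub> z = z \<otimes>\<^bsub>St\<^esub> k"
    using dc unfolding discrete_covering_def lie_group_def topological_group_def by auto
  have cont: "continuous_map (subtopology Tt A) (discrete_topology (group_kernel St S \<pi>))
      (commutator St x)"
    unfolding A_def using dc x by (rule discrete_covering_commutator_continuous_into_kernel)
  have "commutator St x y = commutator St x \<one>\<^bsub>St\<^esub>"
  proof (rule fibrewise_constant_on_vimage_connectedin[OF _ _ B(1) _ A_def cont])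
    show "continuous_map Tt T \<pi>" "open_map Tt T \<pi>"
      using cov covering_map_imp_open_map by (auto simp: covering_map_def)
    show "B \<subseteq> \<pi> ` topspace Tt"
      using connectedin_subset_topspace[OF B(1)] top surj by simp
    have "k \<otimes>\<^bsub>St\<^esub> x = x \<otimes>\<^bsub>St\<^esub> k" if "k \<in> carrier St" "\<pi> k = \<one>\<^bsub>S\<^esub>" for k
      using central x(1) that unfolding group_kernel_def by blast
    then show "commutator St x z = commutator St x w" if "z \<in> A" "w \<in> A" "\<pi> z = \<pi> w" for z w
      using commutator_eq_if_eq_image[of x w z] x(1) that top by (simp add: A_def)
    show "y \<in> A" "\<one>\<^bsub>St\<^esub> \<in> A"
      using y B(2) top by (auto simp: A_def)
  qed
  also have "\<dots> = \<one>\<^bsub>St\<^esub>"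
    using x(1) by (simp add: commutator_def)
  finally show ?thesis
    using G.commutator_eq_one_iff x(1) y(1) by blast
qed

lemma discrete_covering_centralizer_vimage:
  assumes dc: "discrete_covering St Tt S T \<pi>" and B: "connectedin T B" "\<one>\<^bsub>S\<^esub> \<in> B"
  shows "centralizer_in St (carrier St \<inter> \<pi> -` B) = carrier St \<inter> \<pi> -` centralizer_in S B"
proof
  have "B \<subseteq> carrier S"
    using connectedin_subset_topspace[OF B(1)] dc
    by (simp add: discrete_covering_def lie_group_def topological_group_def)
  then show "centralizer_in St (carrier St \<inter> \<pi> -` B) \<subseteq> carrier St \<inter> \<pi> -` centralizer_in S B"
    using centralizer_vimage_subset[OF discrete_covering_group_hom[OF dc]] dc
    by (simp add: discrete_covering_def)
  show "carrier St \<inter> \<pi> -` centralizer_in S B \<subseteq> centralizer_in St (carrier St \<inter> \<pi> -` B)"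
    using discrete_covering_commute_vimage_connectedin[OF dc B]
    by (auto simp: centralizer_in_def[of St])
qed

theorem lemma3p2:
  fixes St :: "'a monoid" and Tt :: "'a topology"
    and S :: "'b monoid" and T :: "'b topology"
    and \<pi> :: "'a \<Rightarrow> 'b" and G G' :: "'b set"
  assumes "discrete_covering St Tt S T \<pi>"
    and "connected_space Tt" and "connected_space T"
    and "dual_pair S G G'"
    and "connectedin T G" and "connectedin T G'"
  shows "dual_pair St (carrier St \<inter> \<pi> -` G) (carrier St \<inter> \<pi> -` G')"
proof -
  interpret group_hom St S \<pi> using assms(1) by (rule discrete_covering_group_hom)
  have sub: "subgroup G S" "subgroup G' S"
    and cent: "centralizer_in S G' = G" "centralizer_in S G = G'"
    using assms(4) by (auto simp: dual_pair_def)
  have one: "\<one>\<^bsub>S\<^esub> \<in> G" "\<one>\<^bsub>S\<^esub> \<in> G'"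
    using sub subgroup.one_closed by blast+
  show ?thesis
    unfolding dual_pair_def
    using subgroup_vimage[OF sub(1)] subgroup_vimage[OF sub(2)]
      discrete_covering_centralizer_vimage[OF assms(1) assms(5) one(1)]
      discrete_covering_centralizer_vimage[OF assms(1) assms(6) one(2)] cent
    by simp
qed

end
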